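(* Let $G=(V,E,\tau u,\tau e,A)$ be a temporal attributed graph over a finite linearly ordered set of discrete time points, and fix a list of $n\ge 1$ aggregation attributes, so that for each node $u$ and each time point $t\in\tau u(u)$ the node has an attribute tuple $a(u,t)$. For finite sets of time points $\mathcal{T}_{old},\mathcal{T}_{new}$, let $G'[\mathcal{T}_{new}-\mathcal{T}_{old}]$ denote the aggregate (with COUNT, either distinct or non-distinct, as defined in the context) of the difference graph $G[\mathcal{T}_{new}-\mathcal{T}_{old}]$. Then, for the same choice of distinct or non-distinct counting: (i) (extending $\mathcal{T}_{old}$ by union) if $\mathcal{T}_{old}\subseteq\mathcal{T}'_{old}$, then for every aggregate node $a$ present in both $G'[\mathcal{T}_{new}-\mathcal{T}_{old}]$ and $G'[\mathcal{T}_{new}-\mathcal{T}'_{old}]$ its weight in $G'[\mathcal{T}_{new}-\mathcal{T}'_{old}]$ is at most its weight in $G'[\mathcal{T}_{new}-\mathcal{T}_{old}]$, and the same holds for every aggregate edge present in both (temporal aggregation with difference is monotonically decreasing when $\mathcal{T}_{old}$ is extended); (ii) (extending $\mathcal{T}_{new}$ by union) if $\mathcal{T}_{new}\subseteq\mathcal{T}'_{new}$, then for every aggregate node and every aggregate edge present in both $G'[\mathcal{T}_{new}-\mathcal{T}_{old}]$ and $G'[\mathcal{T}'_{new}-\mathcal{T}_{old}]$, its weight in $G'[\mathcal{T}'_{new}-\mathcal{T}_{old}]$ is at least its weight in $G'[\mathcal{T}_{new}-\mathcal{T}_{old}]$ (monotonically increasing when $\mathcal{T}_{new}$ is extended).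
   Context: A temporal attributed graph $G=(V,E,\tau u,\tau e,A)$ has node set $V$, edge set $E$ of pairs $(u,v)$ with $u,v\in V$, and timestamp functions: $\tau u(u)$ is the set of time points at which node $u$ exists and $\tau e(e)$ the set of time points at which edge $e$ exists; $A$ assigns to each $u\in V$ and $t\in\tau u(u)$ a tuple of attribute values. Given a chosen list of aggregation attributes, $a(u,t)$ denotes the tuple of values of those attributes of $u$ at time $t$. Difference graph $G[\mathcal{T}_1-\mathcal{T}_2]$: its edge set is $E_-=\{e\in E:\tau e(e)\cap\mathcal{T}_1\neq\emptyset \text{ and } \tau e(e)\cap\mathcal{T}_2=\emptyset\}$ with timestamps $\tau e_-(e)=\tau e(e)\cap\mathcal{T}_1$; its node set is $V_-=\{u\in V:\tau u(u)\cap\mathcal{T}_1\neq\emptyset \text{ and } (\tau u(u)\cap\mathcal{T}_2=\emptyset \text{ or } u \text{ is an endpoint of some edge in } E_-)\}$ with timestamps $\tau u_-(u)=\tau u(u)\cap\mathcal{T}_1$; attribute values are those of $G$ at the retained time points. Aggregation with COUNT of a temporal attributed graph $H$ (here $H=G[\mathcal{T}_1-\mathcal{T}_2]$ with node timestamps $\tau u_H$ and edge timestamps $\tau e_H$): there is an aggregate node for each tuple $a$ such that $a=a(u,t)$ for some node $u$ of $H$ and $t\in\tau u_H(u)$, and an aggregate edge $(a,b)$ for each pair of tuples such that some edge $(u,v)$ of $H$ and $t\in\tau e_H((u,v))$ satisfy $a(u,t)=a$, $a(v,t)=b$. In distinct aggregation the weight of aggregate node $a$ is the number of distinct nodes $u$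 of $H$ with $a(u,t)=a$ for some $t\in\tau u_H(u)$, and the weight of aggregate edge $(a,b)$ is the number of distinct edges $(u,v)$ of $H$ with $a(u,t)=a, a(v,t)=b$ for some $t\in\tau e_H((u,v))$. In non-distinct aggregation appearances are counted with multiplicity: the weight of $a$ is the number of pairs $(u,t)$ with $t\in\tau u_H(u)$ and $a(u,t)=a$, and the weight of $(a,b)$ is the number of pairs $((u,v),t)$ with $t\in\tau e_H((u,v))$, $a(u,t)=a$, $a(v,t)=b$. *)

theory Defs
  imports Main
begin

record ('v, 't, 'val) tgraph =
  nodes :: "'v set"
  edges :: "('v \<times> 'v) set"
  tnode :: "'v \<Rightarrow> 't set"
  tedge :: "('v \<times> 'v) \<Rightarrow> 't set"
  attr  :: "'v \<Rightarrow> 't \<Rightarrow> 'val list"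

definition wf_tgraph :: "'t set \<Rightarrow> nat \<Rightarrow> ('v, 't, 'val) tgraph \<Rightarrow> bool" where
  "wf_tgraph Tdom m G \<longleftrightarrow>
     finite Tdom \<and> finite (nodes G) \<and> edges G \<subseteq> nodes G \<times> nodes G \<and>
     (\<forall>u\<in>nodes G. tnode G u \<subseteq> Tdom) \<and>
     (\<forall>e\<in>edges G. tedge G e \<subseteq> Tdom) \<and>
     (\<forall>u\<in>nodes G. \<forall>t\<in>tnode G u. length (attr G u t) = m)"

definition agg_tuple :: "('v, 't, 'val) tgraph \<Rightarrow> nat list \<Rightarrow> 'v \<Rightarrow> 't \<Rightarrow> 'val list" where
  "agg_tuple G idx u t = map (\<lambda>i. attr G u t ! i) idx"

definition diff_edges :: "('v, 't, 'val) tgraph \<Rightarrow> 't set \<Rightarrow> 't set \<Rightarrow> ('v \<times> 'v) set" where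
  "diff_edges G T1 T2 = {e \<in> edges G. tedge G e \<inter> T1 \<noteq> {} \<and> tedge G e \<inter> T2 = {}}"

definition diff_graph :: "('v, 't, 'val) tgraph \<Rightarrow> 't set \<Rightarrow> 't set \<Rightarrow> ('v, 't, 'val) tgraph" where
  "diff_graph G T1 T2 =
     \<lparr> nodes = {u \<in> nodes G. tnode G u \<inter> T1 \<noteq> {} \<and>
                 (tnode G u \<inter> T2 = {} \<or> (\<exists>e\<in>diff_edges G T1 T2. u = fst e \<or> u = snd e))},
       edges = diff_edges G T1 T2,
       tnode = (\<lambda>u. tnode G u \<inter> T1),
       tedge = (\<lambda>e. tedge G e \<inter> T1),
       attr = attr G \<rparr>"

datatype count_mode = Distinct | NonDistinct

definition agg_nodes :: "('v, 't, 'val) tgraph \<Rightarrow> ('v \<Rightarrow> 't \<Rightarrow> 'b) \<Rightarrow> 'b set" where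
  "agg_nodes H a = {x. \<exists>u\<in>nodes H. \<exists>t\<in>tnode H u. a u t = x}"

definition agg_edges :: "('v, 't, 'val) tgraph \<Rightarrow> ('v \<Rightarrow> 't \<Rightarrow> 'b) \<Rightarrow> ('b \<times> 'b) set" where
  "agg_edges H a = {(x, y). \<exists>(u, v)\<in>edges H. \<exists>t\<in>tedge H (u, v). a u t = x \<and> a v t = y}"

fun node_weight :: "count_mode \<Rightarrow> ('v, 't, 'val) tgraph \<Rightarrow> ('v \<Rightarrow> 't \<Rightarrow> 'b) \<Rightarrow> 'b \<Rightarrow> nat" where
  "node_weight Distinct H a x = card {u \<in> nodes H. \<exists>t\<in>tnode H u. a u t = x}"
| "node_weight NonDistinct H a x = card {(u, t). u \<in> nodes H \<and> t \<in> tnode H u \<and> a u t = x}"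

fun edge_weight :: "count_mode \<Rightarrow> ('v, 't, 'val) tgraph \<Rightarrow> ('v \<Rightarrow> 't \<Rightarrow> 'b) \<Rightarrow> ('b \<times> 'b) \<Rightarrow> nat" where
  "edge_weight Distinct H a (x, y) =
     card {(u, v). (u, v) \<in> edges H \<and> (\<exists>t\<in>tedge H (u, v). a u t = x \<and> a v t = y)}"
| "edge_weight NonDistinct H a (x, y) =
     card {((u, v), t). (u, v) \<in> edges H \<and> t \<in> tedge H (u, v) \<and> a u t = x \<and> a v t = y}"

end

theory Submission
  imports Defs
begin

text \<open>Enlarging \<open>T\<^sub>n\<^sub>e\<^sub>w\<close> or shrinking \<open>T\<^sub>o\<^sub>l\<^sub>d\<close> can only add nodes, edges and time stamps to
  the difference graph, and in either counting mode the weight of an aggregate node or edge is the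
  cardinality of a set that grows with the graph. So the inequalities hold for every tuple, not only
  for those present in both aggregates.\<close>

definition temporal_subgraph :: "('v, 't, 'val) tgraph \<Rightarrow> ('v, 't, 'val) tgraph \<Rightarrow> bool" where
  "temporal_subgraph H H' \<longleftrightarrow>
     nodes H \<subseteq> nodes H' \<and> edges H \<subseteq> edges H' \<and>
     (\<forall>u. tnode H u \<subseteq> tnode H' u) \<and> (\<forall>e. tedge H e \<subseteq> tedge H' e)"

definition finite_tgraph :: "('v, 't, 'val) tgraph \<Rightarrow> bool" where
  "finite_tgraph H \<longleftrightarrow>
     finite (nodes H) \<and> finite (edges H) \<and>
     (\<forall>u\<in>nodes H. finite (tnode H u)) \<and> (\<forall>e\<in>edges H. finite (tedge H e))"

lemma node_weight_mono:
  assumes sub: "temporal_subgraph H H'" and fin: "finite_tgraph H'"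
  shows "node_weight mode H a x \<le> node_weight mode H' a x"
proof (cases mode)
  case Distinct
  have "card {u \<in> nodes H. \<exists>t\<in>tnode H u. a u t = x} \<le> card {u \<in> nodes H'. \<exists>t\<in>tnode H' u. a u t = x}"
    using sub fin unfolding temporal_subgraph_def finite_tgraph_def by (intro card_mono) (auto, blast)
  with Distinct show ?thesis by simp
next
  case NonDistinct
  have "{(u, t). u \<in> nodes H' \<and> t \<in> tnode H' u \<and> a u t = x} \<subseteq> Sigma (nodes H') (tnode H')"
    by auto
  moreover have "finite (Sigma (nodes H') (tnode H'))"
    using fin unfolding finite_tgraph_def by blast
  ultimately have "card {(u, t). u \<in> nodes H \<and> t \<in> tnode H u \<and> a u t = x}
      \<le> card {(u, t). u \<in> nodes H' \<and> t \<in> tnode H' u \<and> a u t = x}"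
    using sub unfolding temporal_subgraph_def by (intro card_mono) (auto intro: finite_subset)
  with NonDistinct show ?thesis by simp
qed

lemma edge_weight_mono:
  assumes sub: "temporal_subgraph H H'" and fin: "finite_tgraph H'"
  shows "edge_weight mode H a p \<le> edge_weight mode H' a p"
proof -
  obtain x y where p: "p = (x, y)" by fastforce
  show ?thesis
  proof (cases mode)
    case Distinct
    have "card {(u, v). (u, v) \<in> edges H \<and> (\<exists>t\<in>tedge H (u, v). a u t = x \<and> a v t = y)}
        \<le> card {(u, v). (u, v) \<in> edges H' \<and> (\<exists>t\<in>tedge H' (u, v). a u t = x \<and> a v t = y)}"
      using sub fin unfolding temporal_subgraph_def finite_tgraph_def
      by (intro card_mono) (auto intro: finite_subset, blast)
    with Distinct p show ?thesis by simp
  next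
    case NonDistinct
    have "{((u, v), t). (u, v) \<in> edges H' \<and> t \<in> tedge H' (u, v) \<and> a u t = x \<and> a v t = y}
        \<subseteq> Sigma (edges H') (tedge H')"
      by auto
    moreover have "finite (Sigma (edges H') (tedge H'))"
      using fin unfolding finite_tgraph_def by blast
    ultimately have "card {((u, v), t). (u, v) \<in> edges H \<and> t \<in> tedge H (u, v) \<and> a u t = x \<and> a v t = y}
        \<le> card {((u, v), t). (u, v) \<in> edges H' \<and> t \<in> tedge H' (u, v) \<and> a u t = x \<and> a v t = y}"
      using sub unfolding temporal_subgraph_def by (intro card_mono) (auto intro: finite_subset, blast)
    with NonDistinct p show ?thesis by simp
  qed
qed

lemma diff_edges_mono:
  assumes "T1 \<subseteq> T1'" "T2' \<subseteq> T2"
  shows "diff_edges G T1 T2 \<subseteq> diff_edges G T1' T2'"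
  using assms unfolding diff_edges_def by auto

lemma diff_graph_mono:
  assumes "T1 \<subseteq> T1'" "T2' \<subseteq> T2"
  shows "temporal_subgraph (diff_graph G T1 T2) (diff_graph G T1' T2')"
  using assms diff_edges_mono[OF assms, of G]
  unfolding temporal_subgraph_def diff_graph_def by auto

lemma temporal_subgraph_diff_graph: "temporal_subgraph (diff_graph G T1 T2) G"
  unfolding temporal_subgraph_def diff_graph_def diff_edges_def by auto

lemma finite_tgraph_if_wf_tgraph:
  assumes "wf_tgraph Tdom m G"
  shows "finite_tgraph G"
proof -
  have "finite (nodes G)" "edges G \<subseteq> nodes G \<times> nodes G"
    using assms unfolding wf_tgraph_def by auto
  then have "finite (edges G)"
    by (meson finite_SigmaI finite_subset)
  with assms show ?thesis
    unfolding wf_tgraph_def finite_tgraph_def by (meson finite_subset)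
qed

lemma finite_tgraph_subgraph:
  assumes "temporal_subgraph H H'" "finite_tgraph H'"
  shows "finite_tgraph H"
  using assms unfolding temporal_subgraph_def finite_tgraph_def by (meson finite_subset subsetD)

theorem lemma2:
  fixes G :: "('v, 't :: linorder, 'val) tgraph"
    and Tdom :: "'t set" and m :: nat and idx :: "nat list"
    and Told Told' Tnew Tnew' :: "'t set" and mode :: count_mode
  assumes wf: "wf_tgraph Tdom m G"
    and idx_ne: "length idx \<ge> 1"
    and idx_ok: "\<forall>i\<in>set idx. i < m"
    and fin: "finite Told" "finite Told'" "finite Tnew" "finite Tnew'"
  defines "a \<equiv> agg_tuple G idx"
  shows "(Told \<subseteq> Told' \<longrightarrow>
           (\<forall>x \<in> agg_nodes (diff_graph G Tnew Told) a \<inter> agg_nodes (diff_graph G Tnew Told') a.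
              node_weight mode (diff_graph G Tnew Told') a x \<le> node_weight mode (diff_graph G Tnew Told) a x) \<and>
           (\<forall>p \<in> agg_edges (diff_graph G Tnew Told) a \<inter> agg_edges (diff_graph G Tnew Told') a.
              edge_weight mode (diff_graph G Tnew Told') a p \<le> edge_weight mode (diff_graph G Tnew Told) a p)) \<and>
         (Tnew \<subseteq> Tnew' \<longrightarrow>
           (\<forall>x \<in> agg_nodes (diff_graph G Tnew Told) a \<inter> agg_nodes (diff_graph G Tnew' Told) a.
              node_weight mode (diff_graph G Tnew Told) a x \<le> node_weight mode (diff_graph G Tnew' Told) a x) \<and>
           (\<forall>p \<in> agg_edges (diff_graph G Tnew Told) a \<inter> agg_edges (diff_graph G Tnew' Told) a.
              edge_weight mode (diff_graph G Tnew Told) a p \<le> edge_weight mode (diff_graph G Tnew' Told) a p))"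
proof -
  have weights_mono:
    "node_weight mode (diff_graph G New Old) a x \<le> node_weight mode (diff_graph G New' Old') a x"
    "edge_weight mode (diff_graph G New Old) a p \<le> edge_weight mode (diff_graph G New' Old') a p"
    if "New \<subseteq> New'" "Old' \<subseteq> Old" for New New' Old Old' x p
    using diff_graph_mono[OF that] finite_tgraph_subgraph[OF
        temporal_subgraph_diff_graph finite_tgraph_if_wf_tgraph[OF wf]]
    by (blast intro: node_weight_mono edge_weight_mono)+
  show ?thesis
    using weights_mono[where New = Tnew and New' = Tnew and Old = Told' and Old' = Told]
      weights_mono[where New = Tnew and New' = Tnew' and Old = Told and Old' = Told] by simp
qed

end
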